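(* Let $L>0$ and let $\phi$ satisfy (H_φ) with $\phi(0)=+\infty$. Let $u\in H^1_0(0,L)$ with $\phi(u)\in L^2(0,L)$. If $\int_0^{\delta}\phi(t)\,dt=+\infty$ for every $\delta\in(0,1)$, then $u(x)\le0$ for all $x\in[0,L]$. If $\int_{-\delta}^0\phi(t)\,dt=+\infty$ for every $\delta\in(0,1)$, then $u(x)\ge0$ for all $x\in[0,L]$.
   Context: (H_φ): $\phi:\mathbb{R}\to\mathbb{R}\cup\{+\infty\}$ is continuous when $\mathbb{R}\cup\{+\infty\}$ carries its usual topology, and $\phi(s)<+\infty$ for every $s\neq0$. Functions in $H^1_0(0,L)$ are identified with their continuous representatives. *)

theory Defs
  imports "HOL-Analysis.Analysis"
begin

text \<open>(H_phi): phi : R -> R \<union> {+infinity}, modelled as an extended-real valued function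
  never taking the value -infinity; continuity w.r.t. the order topology of ereal
  restricted to R \<union> {+infinity} is exactly the usual topology.\<close>
definition H_phi :: "(real \<Rightarrow> ereal) \<Rightarrow> bool" where
  "H_phi \<phi> \<longleftrightarrow> continuous_on UNIV \<phi> \<and> (\<forall>s. \<phi> s \<noteq> -\<infinity>) \<and> (\<forall>s. s \<noteq> 0 \<longrightarrow> \<phi> s < \<infinity>)"

definition L2_on :: "real \<Rightarrow> (real \<Rightarrow> real) \<Rightarrow> bool" where
  "L2_on L f \<longleftrightarrow> set_borel_measurable lborel {0<..<L} f
      \<and> set_integrable lborel {0<..<L} (\<lambda>x. (f x)\<^sup>2)"

definition C1c_test :: "real \<Rightarrow> (real \<Rightarrow> real) \<Rightarrow> (real \<Rightarrow> real) \<Rightarrow> bool" where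
  "C1c_test L \<psi> \<psi>' \<longleftrightarrow> (\<forall>x. (\<psi> has_real_derivative \<psi>' x) (at x)) \<and> continuous_on UNIV \<psi>'
      \<and> (\<exists>a b. 0 < a \<and> a \<le> b \<and> b < L \<and> (\<forall>x. x \<notin> {a..b} \<longrightarrow> \<psi> x = 0))"

text \<open>H^1(0,L): u \<in> L^2 with a weak derivative g \<in> L^2 (Brezis, Def. 8.1, test
  functions in C^1_c). H^1_0(0,L): additionally, the continuous representative (which
  we take u itself to be on [0,L]) vanishes at 0 and L.\<close>
definition H1_on :: "real \<Rightarrow> (real \<Rightarrow> real) \<Rightarrow> bool" where
  "H1_on L u \<longleftrightarrow> L2_on L u \<and> (\<exists>g. L2_on L g \<and>
      (\<forall>\<psi> \<psi>'. C1c_test L \<psi> \<psi>' \<longrightarrow>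
         (LINT x:{0<..<L}|lborel. u x * \<psi>' x) = - (LINT x:{0<..<L}|lborel. g x * \<psi> x)))"

definition H1_0 :: "real \<Rightarrow> (real \<Rightarrow> real) \<Rightarrow> bool" where
  "H1_0 L u \<longleftrightarrow> H1_on L u \<and> continuous_on {0..L} u \<and> u 0 = 0 \<and> u L = 0"

definition comp_L2 :: "real \<Rightarrow> (real \<Rightarrow> ereal) \<Rightarrow> (real \<Rightarrow> real) \<Rightarrow> bool" where
  "comp_L2 L \<phi> u \<longleftrightarrow> (AE x in lborel. x \<in> {0<..<L} \<longrightarrow> \<phi> (u x) \<noteq> \<infinity>)
      \<and> L2_on L (\<lambda>x. real_of_ereal (\<phi> (u x)))"

end

theory Submission
  imports Defs
begin

text \<open>Testing the weak formulation against plateau functions shows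
  \<open>\<bar>u y - u x\<bar> \<le> \<integral>\<^sub>x\<^sup>y \<bar>g\<bar>\<close> for the weak derivative \<open>g\<close>. Suppose \<open>u x\<^sub>0 > 0\<close> and fix levels
  \<open>0 < \<epsilon> < c < u x\<^sub>0\<close>. Climbing from \<open>u 0 = 0\<close> to \<open>u x\<^sub>0\<close>, \<open>u\<close> crosses every band \<open>[a,b] \<subseteq> [\<epsilon>,c]\<close>
  on a segment where it stays in the band, which costs \<open>\<integral> \<bar>g\<bar> \<ge> b - a\<close> while \<open>\<phi>(u) \<approx> \<phi>(a)\<close>.
  Summing over a fine partition of \<open>[\<epsilon>,c]\<close> bounds \<open>\<integral>\<^sub>\<epsilon>\<^sup>c \<phi>\<close> by \<open>2 (c - \<epsilon>)\<close> plus
  \<open>\<integral> \<bar>\<phi>(u)\<bar> \<bar>g\<bar>\<close>, which is finite because \<open>\<phi>(u)\<close> and \<open>g\<close> are in \<open>L\<^sup>2\<close>; this contradicts the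
  divergence of \<open>\<integral>\<^sub>0\<^sup>\<delta> \<phi>\<close> as \<open>\<epsilon> \<rightarrow> 0\<close>. The lower bound follows by the reflection
  \<open>t \<mapsto> -t\<close>.\<close>

section \<open>Unit bumps and plateau test functions\<close>

text \<open>The factor \<open>6 / (b - a)\<^sup>3\<close> normalises the bump to unit mass.\<close>

definition bump :: "real \<Rightarrow> real \<Rightarrow> real \<Rightarrow> real" where
  "bump a b s = 6 / (b - a)^3 * max 0 ((s - a) * (b - s))"

lemma continuous_on_bump: "continuous_on S (bump a b)"
  unfolding bump_def by (intro continuous_intros)

lemma bump_nonneg: "a \<le> b \<Longrightarrow> 0 \<le> bump a b s"
  unfolding bump_def by simp

lemma bump_eq_0:
  assumes "a \<le> b" "s \<notin> {a<..<b}"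
  shows "bump a b s = 0"
proof -
  have "(s - a) * (b - s) \<le> 0"
    using assms by (auto simp: not_less intro: mult_nonpos_nonneg mult_nonneg_nonpos)
  then show ?thesis unfolding bump_def by simp
qed

lemma bump_has_integral:
  assumes "a < b"
  shows "(bump a b has_integral 1) {a..b}"
proof -
  define F where "F s = 6 / (b - a)^3 * ((b - a) * (s - a)^2 / 2 - (s - a)^3 / 3)" for s
  have "((\<lambda>s. 6 / (b - a)^3 * ((s - a) * (b - s))) has_integral (F b - F a)) {a..b}"
  proof (rule fundamental_theorem_of_calculus)
    fix x assume "x \<in> {a..b}"
    have "(F has_real_derivative 6 / (b - a)^3 * ((x - a) * (b - x))) (at x)"
      unfolding F_def
      by (rule derivative_eq_intros refl | simp)+ (simp add: field_simps power2_eq_square)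
    then show "(F has_vector_derivative 6 / (b - a)^3 * ((x - a) * (b - x))) (at x within {a..b})"
      by (simp add: has_real_derivative_iff_has_vector_derivative has_vector_derivative_at_within)
  qed (use assms in simp)
  moreover have "F b - F a = 6 / (b - a)^3 * ((b - a)^3 / 6)"
    unfolding F_def by (simp add: power2_eq_square power3_eq_cube)
  then have "F b - F a = 1"
    using assms by simp
  ultimately have "((\<lambda>s. 6 / (b - a)^3 * ((s - a) * (b - s))) has_integral 1) {a..b}"
    by simp
  then show ?thesis
    by (rule has_integral_eq[rotated]) (simp add: bump_def max_absorb2)
qed

lemma integral_bump_left:
  assumes "a \<le> b" "t \<le> a"
  shows "integral {A..t} (bump a b) = 0"
proof -
  have "integral {A..t} (bump a b) = integral {A..t} (\<lambda>_. 0)"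
    by (rule integral_cong) (use assms in \<open>auto intro!: bump_eq_0\<close>)
  then show ?thesis by simp
qed

lemma integral_bump_right:
  assumes "a < b" "A \<le> a" "b \<le> t"
  shows "integral {A..t} (bump a b) = 1"
proof -
  have "(bump a b has_integral 1) {A..t}"
    by (rule has_integral_on_superset[OF bump_has_integral[OF assms(1)]])
       (use assms in \<open>auto intro!: bump_eq_0\<close>)
  then show ?thesis by (rule integral_unique)
qed

lemma integral_bump_bounds:
  assumes "a < b" "A \<le> a"
  shows "0 \<le> integral {A..t} (bump a b)" "integral {A..t} (bump a b) \<le> 1"
proof -
  have int: "bump a b integrable_on {c..d}" for c d
    by (rule integrable_continuous_interval[OF continuous_on_bump])
  show "0 \<le> integral {A..t} (bump a b)"
    using assms by (intro integral_nonneg int bump_nonneg) auto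
  have "integral {A..t} (bump a b) \<le> integral {A..max t b} (bump a b)"
    using assms by (intro integral_subset_le int) (auto intro!: bump_nonneg)
  also have "\<dots> = 1" using assms by (intro integral_bump_right) auto
  finally show "integral {A..t} (bump a b) \<le> 1" .
qed

lemma integral_mult_bump_approx:
  fixes v :: "real \<Rightarrow> real"
  assumes "a < b" "continuous_on {a..b} v" "\<And>s. s \<in> {a..b} \<Longrightarrow> \<bar>v s - v0\<bar> \<le> e"
  shows "\<bar>integral {a..b} (\<lambda>s. v s * bump a b s) - v0\<bar> \<le> e"
proof -
  have int: "(\<lambda>s. c s * bump a b s) integrable_on {a..b}" if "continuous_on {a..b} c" for c
    by (intro integrable_continuous_interval continuous_intros that continuous_on_bump)
  have mass: "integral {a..b} (bump a b) = 1"
    using bump_has_integral[OF assms(1)] by (rule integral_unique)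
  have "integral {a..b} (\<lambda>s. v s * bump a b s) - v0
      = integral {a..b} (\<lambda>s. (v s - v0) * bump a b s)"
    using integral_diff[OF int[OF assms(2)] int[of "\<lambda>_. v0"]] mass
    by (simp add: left_diff_distrib)
  also have "\<bar>\<dots>\<bar> \<le> integral {a..b} (\<lambda>s. e * bump a b s)"
  proof (rule integral_norm_bound_integral[where f = "\<lambda>s. (v s - v0) * bump a b s", simplified])
    show "(\<lambda>s. (v s - v0) * bump a b s) integrable_on {a..b}"
      by (intro int continuous_intros assms(2))
    show "(\<lambda>s. e * bump a b s) integrable_on {a..b}"
      by (intro int continuous_intros)
    fix s assume "s \<in> {a..b}"
    then show "\<bar>(v s - v0) * bump a b s\<bar> \<le> e * bump a b s"
      using assms(1,3) bump_nonneg[of a b s] by (simp add: abs_mult mult_right_mono)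
  qed
  also have "\<dots> = e" using mass by simp
  finally show ?thesis .
qed

lemma integral_mult_bump_restrict:
  fixes v :: "real \<Rightarrow> real"
  assumes "continuous_on {c..d} v" "c \<le> a" "a \<le> b" "b \<le> d"
  shows "integral {c..d} (\<lambda>s. v s * bump a b s) = integral {a..b} (\<lambda>s. v s * bump a b s)"
proof -
  have "(\<lambda>s. v s * bump a b s) integrable_on {a..b}"
    by (intro integrable_continuous_interval continuous_intros continuous_on_bump
        continuous_on_subset[OF assms(1)]) (use assms in auto)
  then have "((\<lambda>s. v s * bump a b s) has_integral integral {a..b} (\<lambda>s. v s * bump a b s)) {c..d}"
    by (rule has_integral_on_superset[OF integrable_integral]) (use assms bump_eq_0[of a b] in auto)
  then show ?thesis by (rule integral_unique)
qed

lemma has_real_derivative_integral_upper: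
  fixes p :: "real \<Rightarrow> real"
  assumes "continuous_on UNIV p" "A < B" "\<And>s. s < B \<Longrightarrow> p s = 0"
  shows "((\<lambda>t. integral {A..t} p) has_real_derivative p t) (at t)"
proof (cases "t < B")
  case True
  have zero: "integral {A..s} p = 0" if "s < B" for s
  proof -
    have "integral {A..s} p = integral {A..s} (\<lambda>_. 0)"
      by (rule integral_cong) (use that assms(3) in auto)
    then show ?thesis by simp
  qed
  have "((\<lambda>_. 0::real) has_real_derivative p t) (at t)"
    using assms(3) True by simp
  then show ?thesis
    by (rule has_field_derivative_transform_within_open[of _ _ _ "{..<B}"]) (use True zero in auto)
next
  case False
  then have "A < t" using assms(2) by simp
  have "((\<lambda>x. integral {A..x} p) has_real_derivative p t) (at t within {A..t+1})"
    by (rule integral_has_real_derivative)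
       (use assms(1) \<open>A < t\<close> in \<open>auto intro: continuous_on_subset\<close>)
  then show ?thesis using at_within_Icc_at[OF \<open>A < t\<close>, of "t + 1"] by simp
qed

text \<open>The plateau rises from 0 to 1 on \<open>[a,x]\<close>, equals 1 on \<open>[x,y]\<close> and falls back to 0
  on \<open>[y,b]\<close>. Its derivative is a difference of unit bumps, so testing a continuous \<open>u\<close>
  against it yields approximately \<open>u x - u y\<close>.\<close>

definition plateau :: "real \<Rightarrow> real \<Rightarrow> real \<Rightarrow> real \<Rightarrow> real \<Rightarrow> real" where
  "plateau a x y b t = integral {a - 1..t} (\<lambda>s. bump a x s - bump y b s)"

lemma plateau_has_real_derivative:
  assumes "a < x" "x \<le> y" "y < b"
  shows "(plateau a x y b has_real_derivative bump a x t - bump y b t) (at t)"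
  unfolding plateau_def
proof (rule has_real_derivative_integral_upper[where B = a])
  show "continuous_on UNIV (\<lambda>s. bump a x s - bump y b s)"
    by (intro continuous_intros continuous_on_bump)
  show "bump a x s - bump y b s = 0" if "s < a" for s
    using that assms by (simp add: bump_eq_0)
qed simp

lemma plateau_eq:
  assumes "a < x" "x \<le> y" "y < b"
  shows "plateau a x y b t = integral {a - 1..t} (bump a x) - integral {a - 1..t} (bump y b)"
  unfolding plateau_def
  by (intro integral_diff integrable_continuous_interval continuous_on_bump)

lemma plateau_bounds:
  assumes "a < x" "x \<le> y" "y < b"
  shows "0 \<le> plateau a x y b t" "plateau a x y b t \<le> 1"
proof -
  note up = integral_bump_bounds[of a x "a - 1" t] and down = integral_bump_bounds[of y b "a - 1" t]
  show "0 \<le> plateau a x y b t" "plateau a x y b t \<le> 1"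
  proof (atomize (full), cases "t \<le> y")
    case True
    then show "0 \<le> plateau a x y b t \<and> plateau a x y b t \<le> 1"
      using up integral_bump_left[of y b t "a - 1"] assms by (simp add: plateau_eq)
  next
    case False
    then show "0 \<le> plateau a x y b t \<and> plateau a x y b t \<le> 1"
      using down integral_bump_right[of a x "a - 1" t] assms by (simp add: plateau_eq)
  qed
qed

lemma plateau_eq_0:
  assumes "a < x" "x \<le> y" "y < b" "t \<notin> {a..b}"
  shows "plateau a x y b t = 0"
proof (cases "t < a")
  case True
  then show ?thesis
    using assms integral_bump_left[of a x t "a - 1"] integral_bump_left[of y b t "a - 1"]
    by (simp add: plateau_eq)
next
  case False
  then show ?thesis
    using assms integral_bump_right[of a x "a - 1" t] integral_bump_right[of y b "a - 1" t]
    by (simp add: plateau_eq)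
qed

lemma C1c_test_plateau:
  assumes "0 < a" "a < x" "x \<le> y" "y < b" "b < L"
  shows "C1c_test L (plateau a x y b) (\<lambda>t. bump a x t - bump y b t)"
  unfolding C1c_test_def
proof (intro conjI allI)
  show "(plateau a x y b has_real_derivative bump a x t - bump y b t) (at t)" for t
    using assms by (intro plateau_has_real_derivative) auto
  show "continuous_on UNIV (\<lambda>t. bump a x t - bump y b t)"
    by (intro continuous_intros continuous_on_bump)
  show "\<exists>a' b'. 0 < a' \<and> a' \<le> b' \<and> b' < L \<and> (\<forall>t. t \<notin> {a'..b'} \<longrightarrow> plateau a x y b t = 0)"
    using assms plateau_eq_0[of a x y b] by (intro exI[of _ a] exI[of _ b]) auto
qed

lemma tendsto_integral_mult_bump:
  fixes v :: "real \<Rightarrow> real" and \<alpha> \<beta> :: "'a \<Rightarrow> real"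
  assumes v: "continuous_on S v" "z \<in> S" and lim: "(\<alpha> \<longlongrightarrow> z) F" "(\<beta> \<longlongrightarrow> z) F"
    and ev: "eventually (\<lambda>h. \<alpha> h < \<beta> h \<and> {\<alpha> h..\<beta> h} \<subseteq> S) F"
  shows "((\<lambda>h. integral {\<alpha> h..\<beta> h} (\<lambda>s. v s * bump (\<alpha> h) (\<beta> h) s)) \<longlongrightarrow> v z) F"
  unfolding tendsto_iff
proof (intro allI impI)
  fix e :: real assume "e > 0"
  then obtain d where d: "d > 0" "\<And>s. s \<in> S \<Longrightarrow> \<bar>s - z\<bar> < d \<Longrightarrow> \<bar>v s - v z\<bar> < e / 2"
    using v unfolding continuous_on_iff dist_real_def by (metis half_gt_zero)
  have "eventually (\<lambda>h. \<bar>\<alpha> h - z\<bar> < d) F" "eventually (\<lambda>h. \<bar>\<beta> h - z\<bar> < d) F"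
    using lim \<open>d > 0\<close> unfolding tendsto_iff dist_real_def by auto
  with ev show "eventually (\<lambda>h. dist (integral {\<alpha> h..\<beta> h} (\<lambda>s. v s * bump (\<alpha> h) (\<beta> h) s)) (v z) < e) F"
  proof eventually_elim
    case (elim h)
    have "\<bar>integral {\<alpha> h..\<beta> h} (\<lambda>s. v s * bump (\<alpha> h) (\<beta> h) s) - v z\<bar> \<le> e / 2"
    proof (rule integral_mult_bump_approx)
      show "continuous_on {\<alpha> h..\<beta> h} v" using elim v(1) by (auto intro: continuous_on_subset)
      fix s assume "s \<in> {\<alpha> h..\<beta> h}"
      then show "\<bar>v s - v z\<bar> \<le> e / 2"
        using elim d(2)[of s] by (auto simp: abs_less_iff)
    qed (use elim in simp)
    then show ?case using \<open>e > 0\<close> by (simp add: dist_real_def)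
  qed
qed

lemma set_integrable_continuous_on_Icc:
  fixes F :: "real \<Rightarrow> real"
  assumes "continuous_on {a..b} F"
  shows "set_integrable lborel {a<..<b} F"
proof -
  have "set_integrable lborel {a..b} F"
    unfolding set_integrable_def by (rule borel_integrable_compact[OF compact_Icc assms])
  then show ?thesis by (rule set_integrable_subset) auto
qed

lemma set_borel_measurable_mult:
  fixes f g :: "'a \<Rightarrow> real"
  assumes "set_borel_measurable M A f" "set_borel_measurable M A g"
  shows "set_borel_measurable M A (\<lambda>x. f x * g x)"
proof -
  have "(\<lambda>x. indicator A x *\<^sub>R (f x * g x)) = (\<lambda>x. (indicator A x *\<^sub>R f x) * (indicator A x *\<^sub>R g x))"
    by (auto simp: indicator_def)
  then show ?thesis using assms unfolding set_borel_measurable_def by simp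
qed

lemma L2_on_set_integrable:
  assumes "L2_on L f"
  shows "set_integrable lborel {0<..<L} f"
proof (rule set_integrable_bound[where f = "\<lambda>x. (f x)^2 + 1"])
  have "set_integrable lborel {0<..<L} (\<lambda>x. 1::real)"
    by (rule set_integrable_continuous_on_Icc) simp
  then show "set_integrable lborel {0<..<L} (\<lambda>x. (f x)^2 + 1)"
    using assms unfolding L2_on_def by (intro set_integral_add) auto
  show "set_borel_measurable lborel {0<..<L} f" using assms unfolding L2_on_def by simp
  have "\<bar>y\<bar> \<le> y^2 + 1" for y :: real
    using sum_power2_ge_zero[of "\<bar>y\<bar> - 1" 0] by (simp add: power2_eq_square algebra_simps)
  then show "AE x in lborel. x \<in> {0<..<L} \<longrightarrow> norm (f x) \<le> norm ((f x)^2 + 1)"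
    by (auto intro!: AE_I2)
qed

lemma L2_on_set_integrable_mult:
  assumes "L2_on L f" "L2_on L g"
  shows "set_integrable lborel {0<..<L} (\<lambda>x. f x * g x)"
proof (rule set_integrable_bound[where f = "\<lambda>x. (f x)^2 + (g x)^2"])
  show "set_integrable lborel {0<..<L} (\<lambda>x. (f x)^2 + (g x)^2)"
    using assms unfolding L2_on_def by (intro set_integral_add) auto
  show "set_borel_measurable lborel {0<..<L} (\<lambda>x. f x * g x)"
    using assms unfolding L2_on_def by (intro set_borel_measurable_mult) auto
  have "\<bar>y * z\<bar> \<le> y^2 + z^2" for y z :: real
  proof -
    have "2 * (\<bar>y\<bar> * \<bar>z\<bar>) \<le> y^2 + z^2"
      using sum_power2_ge_zero[of "\<bar>y\<bar> - \<bar>z\<bar>" 0] by (simp add: power2_eq_square algebra_simps)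
    moreover have "0 \<le> \<bar>y\<bar> * \<bar>z\<bar>" by simp
    ultimately show ?thesis unfolding abs_mult by linarith
  qed
  then show "AE x in lborel. x \<in> {0<..<L} \<longrightarrow> norm (f x * g x) \<le> norm ((f x)^2 + (g x)^2)"
    by (auto intro!: AE_I2)
qed

lemma set_integrable_imp_integrable_on_Icc:
  fixes F :: "real \<Rightarrow> real"
  assumes "set_integrable lborel {a<..<b} F"
  shows "F integrable_on {a..b}"
  using set_borel_integral_eq_integral(1)[OF assms] integrable_on_open_interval_real by blast

lemma set_lebesgue_integral_eq_integral_Icc:
  fixes F :: "real \<Rightarrow> real"
  assumes "set_integrable lborel {a<..<b} F"
  shows "(LINT x:{a<..<b}|lborel. F x) = integral {a..b} F"
  using set_borel_integral_eq_integral(2)[OF assms] integral_open_interval_real[of a b F] by simp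

section \<open>Weak derivatives bound the variation\<close>

lemma weak_derivative_plateau_estimate:
  fixes u g :: "real \<Rightarrow> real"
  assumes uc: "continuous_on {0..L} u" and g: "L2_on L g"
    and weak: "\<And>\<psi> \<psi>'. C1c_test L \<psi> \<psi>' \<Longrightarrow>
         (LINT s:{0<..<L}|lborel. u s * \<psi>' s) = - (LINT s:{0<..<L}|lborel. g s * \<psi> s)"
    and pts: "0 < a" "a < x" "x \<le> y" "y < b" "b < L"
  shows "\<bar>integral {0..L} (\<lambda>s. u s * (bump a x s - bump y b s))\<bar> \<le> integral {a..b} (\<lambda>s. \<bar>g s\<bar>)"
proof -
  let ?\<psi> = "plateau a x y b"
  have "continuous_on UNIV ?\<psi>"
    using plateau_has_real_derivative[of a x y b] pts
    by (meson DERIV_isCont continuous_at_imp_continuous_on)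
  then have "?\<psi> \<in> borel_measurable lborel"
    using borel_measurable_continuous_onI by simp
  then have "set_borel_measurable lborel {0<..<L} ?\<psi>"
    unfolding set_borel_measurable_def by (intro borel_measurable_scaleR borel_measurable_indicator) auto
  then have g\<psi>: "set_integrable lborel {0<..<L} (\<lambda>s. g s * ?\<psi> s)"
  proof (intro set_integrable_bound[OF L2_on_set_integrable[OF g]])
    assume "set_borel_measurable lborel {0<..<L} ?\<psi>"
    then show "set_borel_measurable lborel {0<..<L} (\<lambda>s. g s * ?\<psi> s)"
      using g unfolding L2_on_def by (intro set_borel_measurable_mult) auto
    show "AE s in lborel. s \<in> {0<..<L} \<longrightarrow> norm (g s * ?\<psi> s) \<le> norm (g s)"
      using plateau_bounds[of a x y b] pts by (auto intro!: AE_I2 simp: abs_mult intro: mult_left_le)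
  qed
  have u\<psi>': "set_integrable lborel {0<..<L} (\<lambda>s. u s * (bump a x s - bump y b s))"
    by (intro set_integrable_continuous_on_Icc continuous_intros uc continuous_on_bump)
  have "integral {0..L} (\<lambda>s. u s * (bump a x s - bump y b s)) = - integral {0..L} (\<lambda>s. g s * ?\<psi> s)"
    using weak[OF C1c_test_plateau[OF pts]]
    by (simp add: set_lebesgue_integral_eq_integral_Icc[OF u\<psi>'] set_lebesgue_integral_eq_integral_Icc[OF g\<psi>])
  also have "integral {0..L} (\<lambda>s. g s * ?\<psi> s) = integral {a..b} (\<lambda>s. g s * ?\<psi> s)"
  proof -
    have "(\<lambda>s. g s * ?\<psi> s) integrable_on {a..b}"
      by (rule integrable_on_subinterval[OF set_integrable_imp_integrable_on_Icc[OF g\<psi>]])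
         (use pts in auto)
    then have "((\<lambda>s. g s * ?\<psi> s) has_integral integral {a..b} (\<lambda>s. g s * ?\<psi> s)) {0..L}"
      by (rule has_integral_on_superset[OF integrable_integral]) (use pts plateau_eq_0 in auto)
    then show ?thesis by (rule integral_unique)
  qed
  also have "\<bar>- \<dots>\<bar> \<le> integral {a..b} (\<lambda>s. \<bar>g s\<bar>)"
  proof (simp only: abs_minus_cancel,
      rule integral_norm_bound_integral[where f = "\<lambda>s. g s * ?\<psi> s", simplified])
    show "(\<lambda>s. g s * ?\<psi> s) integrable_on {a..b}"
      by (rule integrable_on_subinterval[OF set_integrable_imp_integrable_on_Icc[OF g\<psi>]])
         (use pts in auto)
    show "(\<lambda>s. \<bar>g s\<bar>) integrable_on {a..b}"
      using set_integrable_imp_integrable_on_Icc[OF set_integrable_abs[OF L2_on_set_integrable[OF g]]]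
      by (rule integrable_on_subinterval) (use pts in auto)
    show "\<bar>g s * ?\<psi> s\<bar> \<le> \<bar>g s\<bar>" for s
      using plateau_bounds[of a x y b s] pts by (auto simp: abs_mult intro: mult_left_le)
  qed
  finally show ?thesis .
qed

text \<open>Testing the weak formulation against plateaus that shrink onto \<open>[x,y]\<close> shows that \<open>u\<close>
  is absolutely continuous with derivative \<open>g\<close>.\<close>

lemma weak_derivative_variation_bound:
  fixes u g :: "real \<Rightarrow> real"
  assumes uc: "continuous_on {0..L} u" and g: "L2_on L g"
    and weak: "\<And>\<psi> \<psi>'. C1c_test L \<psi> \<psi>' \<Longrightarrow>
         (LINT s:{0<..<L}|lborel. u s * \<psi>' s) = - (LINT s:{0<..<L}|lborel. g s * \<psi> s)"
    and xy: "0 < x" "x < y" "y < L"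
  shows "\<bar>u y - u x\<bar> \<le> integral {x..y} (\<lambda>s. \<bar>g s\<bar>)"
proof -
  let ?\<rho> = "\<lambda>s. \<bar>g s\<bar>"
  have \<rho>: "?\<rho> integrable_on {0..L}"
    using set_integrable_imp_integrable_on_Icc[OF set_integrable_abs[OF L2_on_set_integrable[OF g]]] .
  define G where "G t = integral {0..t} ?\<rho>" for t
  have G_diff: "integral {p..q} ?\<rho> = G q - G p" if "0 \<le> p" "p \<le> q" "q \<le> L" for p q
    using Henstock_Kurzweil_Integration.integral_combine[OF that(1,2) integrable_on_subinterval[OF \<rho>]]
      that unfolding G_def by simp
  have G_cont: "continuous_on {0..L} G"
    unfolding G_def by (rule indefinite_integral_continuous_1[OF \<rho>])
  have small: "eventually (\<lambda>h. 0 < h \<and> h < x \<and> y + h < L) (at_right 0)"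
    using xy by (intro eventually_conj eventually_at_right_less) (auto simp: eventually_at_right_field
        intro: exI[of _ x] exI[of _ "L - y"])
  have lim_h: "((\<lambda>h. c + h) \<longlongrightarrow> c) (at_right 0)" "((\<lambda>h. c - h) \<longlongrightarrow> c) (at_right 0)" for c :: real
    by (auto intro!: tendsto_eq_intros tendsto_ident_at)
  define \<Psi> where "\<Psi> h = integral {0..L} (\<lambda>s. u s * (bump (x - h) x s - bump y (y + h) s))" for h
  have \<Psi>_eq: "eventually (\<lambda>h. \<Psi> h = integral {x - h..x} (\<lambda>s. u s * bump (x - h) x s)
      - integral {y..y + h} (\<lambda>s. u s * bump y (y + h) s)) (at_right 0)"
    using small
  proof eventually_elim
    case (elim h)
    have int: "(\<lambda>s. u s * bump c d s) integrable_on {0..L}" for c d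
      by (intro integrable_continuous_interval continuous_intros uc continuous_on_bump)
    show ?case
      unfolding \<Psi>_def right_diff_distrib integral_diff[OF int int]
      using elim xy by (simp add: integral_mult_bump_restrict[OF uc])
  qed
  have "((\<lambda>h. integral {x - h..x} (\<lambda>s. u s * bump (x - h) x s)) \<longlongrightarrow> u x) (at_right 0)"
    by (rule tendsto_integral_mult_bump[OF uc _ lim_h(2) tendsto_const])
       (use xy in \<open>auto intro: eventually_mono[OF small]\<close>)
  moreover have "((\<lambda>h. integral {y..y + h} (\<lambda>s. u s * bump y (y + h) s)) \<longlongrightarrow> u y) (at_right 0)"
    by (rule tendsto_integral_mult_bump[OF uc _ tendsto_const lim_h(1)])
       (use xy in \<open>auto intro: eventually_mono[OF small]\<close>)
  ultimately have "(\<Psi> \<longlongrightarrow> u x - u y) (at_right 0)"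
    by (intro Lim_transform_eventually[OF tendsto_diff \<Psi>_eq[THEN eventually_mono]]) auto
  then have lim_\<Psi>: "((\<lambda>h. \<bar>\<Psi> h\<bar>) \<longlongrightarrow> \<bar>u y - u x\<bar>) (at_right 0)"
    by (auto dest: tendsto_rabs simp: abs_minus_commute)
  have "((\<lambda>h. G (y + h) - G (x - h)) \<longlongrightarrow> G y - G x) (at_right 0)"
    using xy by (intro tendsto_diff continuous_on_tendsto_compose[OF G_cont] lim_h
        eventually_mono[OF small]) auto
  moreover have "eventually (\<lambda>h. \<bar>\<Psi> h\<bar> \<le> G (y + h) - G (x - h)) (at_right 0)"
    using small
  proof eventually_elim
    case (elim h)
    have "\<bar>\<Psi> h\<bar> \<le> integral {x - h..y + h} ?\<rho>"
      unfolding \<Psi>_def by (rule weak_derivative_plateau_estimate[OF uc g weak]) (use elim xy in auto)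
    then show ?case using G_diff[of "x - h" "y + h"] elim xy by simp
  qed
  ultimately have "\<bar>u y - u x\<bar> \<le> G y - G x"
    by (rule tendsto_le[OF trivial_limit_at_right_real _ lim_\<Psi>])
  then show ?thesis using G_diff[of x y] xy by simp
qed

section \<open>Crossing levels\<close>

definition first_hit :: "(real \<Rightarrow> real) \<Rightarrow> real \<Rightarrow> real \<Rightarrow> real" where
  "first_hit u x0 t = Inf {z \<in> {0..x0}. u z = t}"

lemma first_hit:
  fixes u :: "real \<Rightarrow> real"
  assumes uc: "continuous_on {0..x0} u" and "0 \<le> x0" "u 0 = 0" "0 < t" "t < u x0"
  shows "first_hit u x0 t \<in> {0..x0}" "u (first_hit u x0 t) = t"
    "\<And>z. 0 \<le> z \<Longrightarrow> z < first_hit u x0 t \<Longrightarrow> u z < t"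
    "\<And>z. z \<in> {0..x0} \<Longrightarrow> u z = t \<Longrightarrow> first_hit u x0 t \<le> z"
proof -
  let ?S = "{z \<in> {0..x0}. u z = t}"
  obtain z0 where "z0 \<in> ?S" using IVT'[of u 0 t x0] uc assms by auto
  then have ne: "?S \<noteq> {}" by auto
  have bdd: "bdd_below ?S" by (rule bdd_belowI[of _ 0]) auto
  have "first_hit u x0 t \<in> ?S" unfolding first_hit_def
    by (rule closed_contains_Inf[OF ne bdd continuous_closed_preimage_constant[OF uc]]) simp
  then show in_S: "first_hit u x0 t \<in> {0..x0}" "u (first_hit u x0 t) = t" by auto
  show lower: "\<And>z. z \<in> {0..x0} \<Longrightarrow> u z = t \<Longrightarrow> first_hit u x0 t \<le> z"
    unfolding first_hit_def by (rule cInf_lower) (use bdd in auto)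
  fix z assume z: "0 \<le> z" "z < first_hit u x0 t"
  show "u z < t"
  proof (rule ccontr)
    assume "\<not> u z < t"
    moreover have "continuous_on {0..z} u"
      by (rule continuous_on_subset[OF uc]) (use z in_S in auto)
    ultimately obtain z' where "0 \<le> z'" "z' \<le> z" "u z' = t"
      using IVT'[of u 0 t z] z assms by auto
    then show False using lower[of z'] z in_S by auto
  qed
qed

text \<open>Between its first hits of the levels \<open>a < b\<close>, \<open>u\<close> crosses the whole band \<open>[a,b]\<close>
  without leaving it: take \<open>p\<close> the last point before the first hit of \<open>b\<close> where \<open>u = a\<close>.\<close>

lemma crossing_segment:
  fixes u :: "real \<Rightarrow> real"
  assumes uc: "continuous_on {0..x0} u" and x0: "0 \<le> x0" and u0: "u 0 = 0"
    and ab: "0 < a" "a < b" "b < u x0"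
  obtains p where "first_hit u x0 a \<le> p" "0 < p" "p < first_hit u x0 b" "u p = a"
    "\<And>z. z \<in> {p..first_hit u x0 b} \<Longrightarrow> a \<le> u z \<and> u z \<le> b"
proof -
  let ?\<tau> = "first_hit u x0 b"
  note hit_a = first_hit[OF uc x0 u0, of a] and hit_b = first_hit[OF uc x0 u0, of b]
  let ?P = "{z \<in> {0..?\<tau>}. u z = a}"
  have uc': "continuous_on {0..?\<tau>} u"
    by (rule continuous_on_subset[OF uc]) (use hit_b ab in auto)
  obtain z0 where "z0 \<in> ?P" using IVT'[of u 0 a ?\<tau>] uc' hit_b ab u0 by auto
  then have ne: "?P \<noteq> {}" by auto
  have bdd: "bdd_above ?P" by (rule bdd_aboveI[of _ ?\<tau>]) auto
  define p where "p = Sup ?P"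
  have "p \<in> ?P" unfolding p_def
    by (rule closed_contains_Sup[OF ne bdd continuous_closed_preimage_constant[OF uc']]) simp
  then have p: "0 \<le> p" "p \<le> ?\<tau>" "u p = a" by auto
  have last: "z \<le> p" if "z \<in> ?P" for z unfolding p_def by (rule cSup_upper[OF that bdd])
  have "p \<noteq> ?\<tau>" "p \<noteq> 0" using p hit_b ab u0 by auto
  with p have p_pos: "0 < p" and p_less: "p < ?\<tau>" by auto
  have hit_a_le: "first_hit u x0 a \<le> p" using hit_a(4)[of p] p hit_b ab by auto
  have band: "a \<le> u z \<and> u z \<le> b" if z: "z \<in> {p..?\<tau>}" for z
  proof
    show "u z \<le> b"
      using hit_b(2) hit_b(3)[of z] z p ab by (cases "z = ?\<tau>") auto
    show "a \<le> u z"
    proof (rule ccontr)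
      assume "\<not> a \<le> u z"
      moreover have "continuous_on {z..?\<tau>} u"
        by (rule continuous_on_subset[OF uc']) (use z p in auto)
      ultimately obtain z' where "z \<le> z'" "z' \<le> ?\<tau>" "u z' = a"
        using IVT'[of u z a ?\<tau>] z hit_b ab by auto
      moreover from this have "z' = z" using last[of z'] z p by auto
      ultimately show False using \<open>\<not> a \<le> u z\<close> by simp
    qed
  qed
  show ?thesis by (rule that[OF hit_a_le p_pos p_less p(3) band])
qed

lemma first_hit_strict_mono:
  fixes u :: "real \<Rightarrow> real"
  assumes "continuous_on {0..x0} u" "0 \<le> x0" "u 0 = 0" "0 < a" "a < b" "b < u x0"
  shows "first_hit u x0 a < first_hit u x0 b"
  using crossing_segment[OF assms] by (metis order.strict_trans1)

lemma crossing_energy: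
  fixes u f \<rho> :: "real \<Rightarrow> real"
  assumes uc: "continuous_on {0..x0} u" and x0: "0 \<le> x0" and u0: "u 0 = 0"
    and var: "\<And>x y. 0 < x \<Longrightarrow> x < y \<Longrightarrow> y \<le> x0 \<Longrightarrow> u y - u x \<le> integral {x..y} \<rho>"
    and \<rho>: "\<rho> integrable_on {0..x0}" "\<And>s. 0 \<le> \<rho> s"
    and w: "(\<lambda>s. \<bar>f (u s)\<bar> * \<rho> s) integrable_on {0..x0}"
    and ab: "0 < a" "a < b" "b < u x0"
    and m: "0 \<le> m" "\<And>t. t \<in> {a..b} \<Longrightarrow> m \<le> \<bar>f t\<bar>"
  shows "m * (b - a) \<le> integral {first_hit u x0 a..first_hit u x0 b} (\<lambda>s. \<bar>f (u s)\<bar> * \<rho> s)"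
proof -
  let ?w = "\<lambda>s. \<bar>f (u s)\<bar> * \<rho> s" and ?\<tau>a = "first_hit u x0 a" and ?\<tau>b = "first_hit u x0 b"
  obtain p where p: "?\<tau>a \<le> p" "0 < p" "p < ?\<tau>b" "u p = a"
    and band: "\<And>z. z \<in> {p..?\<tau>b} \<Longrightarrow> a \<le> u z \<and> u z \<le> b"
    using crossing_segment[OF uc x0 u0 ab] by blast
  have hit_b: "?\<tau>b \<in> {0..x0}" "u ?\<tau>b = b" using first_hit[OF uc x0 u0, of b] ab by auto
  have hit_a: "?\<tau>a \<in> {0..x0}" using first_hit[OF uc x0 u0, of a] ab by auto
  have sub: "{p..?\<tau>b} \<subseteq> {0..x0}" "{?\<tau>a..?\<tau>b} \<subseteq> {0..x0}" using p hit_a hit_b by auto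
  have "m * (b - a) = m * (u ?\<tau>b - u p)" using hit_b p by simp
  also have "\<dots> \<le> m * integral {p..?\<tau>b} \<rho>"
    using var[of p ?\<tau>b] p hit_b m by (intro mult_left_mono) auto
  also have "\<dots> = integral {p..?\<tau>b} (\<lambda>s. m * \<rho> s)" by simp
  also have "\<dots> \<le> integral {p..?\<tau>b} ?w"
  proof (rule integral_le)
    show "(\<lambda>s. m * \<rho> s) integrable_on {p..?\<tau>b}"
      using integrable_on_cmult_left[OF integrable_on_subinterval[OF \<rho>(1) sub(1)], of m] by simp
    show "?w integrable_on {p..?\<tau>b}" using integrable_on_subinterval[OF w sub(1)] .
    show "m * \<rho> s \<le> ?w s" if "s \<in> {p..?\<tau>b}" for s
      using m(2) band[OF that] \<rho>(2)[of s] by (auto intro: mult_right_mono)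
  qed
  also have "\<dots> \<le> integral {?\<tau>a..?\<tau>b} ?w"
    using p sub by (intro integral_subset_le integrable_on_subinterval[OF w]) (auto simp: \<rho>(2))
  finally show ?thesis .
qed

lemma increment_le_if_locally_le:
  fixes F \<Phi> :: "real \<Rightarrow> real"
  assumes "0 < d" "\<epsilon> \<le> c"
    and local: "\<And>a b. \<epsilon> \<le> a \<Longrightarrow> a < b \<Longrightarrow> b \<le> c \<Longrightarrow> b - a < d \<Longrightarrow> F b - F a \<le> \<Phi> b - \<Phi> a"
  shows "F c - F \<epsilon> \<le> \<Phi> c - \<Phi> \<epsilon>"
proof (cases "\<epsilon> = c")
  case False
  obtain n :: nat where n: "(c - \<epsilon>) / d < real n" using reals_Archimedean2 by blast
  with assms False have "0 < real n" by (smt (verit) divide_pos_pos)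
  define h where "h = (c - \<epsilon>) / real n"
  have h: "0 < h" "h < d" "real n * h = c - \<epsilon>"
    using n \<open>0 < real n\<close> assms False unfolding h_def by (auto simp: field_simps)
  have "F (\<epsilon> + real k * h) - F \<epsilon> \<le> \<Phi> (\<epsilon> + real k * h) - \<Phi> \<epsilon>" if "k \<le> n" for k
    using that
  proof (induction k)
    case (Suc k)
    have "real (Suc k) * h \<le> real n * h" using Suc.prems h by (intro mult_right_mono) auto
    then have "F (\<epsilon> + real (Suc k) * h) - F (\<epsilon> + real k * h)
        \<le> \<Phi> (\<epsilon> + real (Suc k) * h) - \<Phi> (\<epsilon> + real k * h)"
      using h by (intro local) (auto simp: algebra_simps)
    then show ?case using Suc by simp
  qed simp
  from this[of n] show ?thesis using h by simp
qed simp

text \<open>A Riemann sum argument: on a short subinterval \<open>[a,b]\<close> of levels, \<open>\<integral>\<^sub>a\<^sup>b f\<close> is at most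
  \<open>(f a + 1) (b - a)\<close> while the crossing costs at least \<open>(f a - 1) (b - a)\<close> of energy.\<close>

lemma integral_le_crossing_energy:
  fixes u f \<rho> :: "real \<Rightarrow> real"
  assumes uc: "continuous_on {0..x0} u" and x0: "0 \<le> x0" and u0: "u 0 = 0"
    and var: "\<And>x y. 0 < x \<Longrightarrow> x < y \<Longrightarrow> y \<le> x0 \<Longrightarrow> u y - u x \<le> integral {x..y} \<rho>"
    and \<rho>: "\<rho> integrable_on {0..x0}" "\<And>s. 0 \<le> \<rho> s"
    and w: "(\<lambda>s. \<bar>f (u s)\<bar> * \<rho> s) integrable_on {0..x0}"
    and fc: "continuous_on {0<..} f"
    and levels: "0 < \<epsilon>" "\<epsilon> \<le> c" "c < u x0"
  shows "integral {\<epsilon>..c} f - 2 * (c - \<epsilon>) \<le> integral {0..x0} (\<lambda>s. \<bar>f (u s)\<bar> * \<rho> s)"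
proof -
  let ?w = "\<lambda>s. \<bar>f (u s)\<bar> * \<rho> s" and ?\<tau> = "first_hit u x0"
  define H where "H q = integral {0..q} ?w" for q
  have w_nonneg: "0 \<le> ?w s" for s using \<rho>(2)[of s] by simp
  have H_diff: "H q - H p = integral {p..q} ?w" if "0 \<le> p" "p \<le> q" "q \<le> x0" for p q
    using Henstock_Kurzweil_Integration.integral_combine[OF that(1,2) integrable_on_subinterval[OF w]]
      that unfolding H_def by simp
  have H_mono: "H p \<le> H q" if "0 \<le> p" "p \<le> q" "q \<le> x0" for p q
    using H_diff[OF that] integral_nonneg[OF integrable_on_subinterval[OF w] w_nonneg, of p q] that
    by simp
  have \<tau>: "?\<tau> t \<in> {0..x0}" if "0 < t" "t \<le> c" for t
    using first_hit(1)[OF uc x0 u0, of t] that levels by auto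
  have fc': "continuous_on {\<epsilon>..c} f" by (rule continuous_on_subset[OF fc]) (use levels in auto)
  then obtain d where d: "d > 0" "\<And>s t. s \<in> {\<epsilon>..c} \<Longrightarrow> t \<in> {\<epsilon>..c} \<Longrightarrow> \<bar>s - t\<bar> < d \<Longrightarrow> \<bar>f s - f t\<bar> < 1"
    using compact_uniformly_continuous[OF fc' compact_Icc]
    unfolding uniformly_continuous_on_def dist_real_def by (metis zero_less_one)
  have "(integral {\<epsilon>..c} f - 2 * c) - (integral {\<epsilon>..\<epsilon>} f - 2 * \<epsilon>) \<le> H (?\<tau> c) - H (?\<tau> \<epsilon>)"
  proof (rule increment_le_if_locally_le[OF d(1) levels(2)])
    fix a b assume ab: "\<epsilon> \<le> a" "a < b" "b \<le> c" "b - a < d"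
    have near: "\<bar>f t - f a\<bar> < 1" if "t \<in> {a..b}" for t using d(2)[of t a] that ab by auto
    have f_int: "f integrable_on {\<epsilon>..b}"
      by (rule integrable_continuous_interval, rule continuous_on_subset[OF fc']) (use ab in auto)
    have "f t \<le> f a + 1" if "t \<in> {a..b}" for t using near[OF that] by linarith
    then have "integral {a..b} f \<le> integral {a..b} (\<lambda>_. f a + 1)"
      by (intro integral_le integrable_on_subinterval[OF f_int]) (use ab in auto)
    then have "integral {a..b} f - 2 * (b - a) \<le> (f a - 1) * (b - a)"
      using ab by (simp add: algebra_simps)
    also have "\<dots> \<le> max 0 (f a - 1) * (b - a)"
      using ab by (intro mult_right_mono) auto
    also have "\<dots> \<le> integral {?\<tau> a..?\<tau> b} ?w"
    proof (rule crossing_energy[OF uc x0 u0 var \<rho> w])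
      show "max 0 (f a - 1) \<le> \<bar>f t\<bar>" if "t \<in> {a..b}" for t
        using near[OF that] by linarith
    qed (use ab levels in auto)
    also have "\<dots> = H (?\<tau> b) - H (?\<tau> a)"
      using first_hit_strict_mono[OF uc x0 u0, of a b] \<tau>[of a] \<tau>[of b] ab levels
      by (intro H_diff[symmetric]) auto
    finally show "(integral {\<epsilon>..b} f - 2 * b) - (integral {\<epsilon>..a} f - 2 * a) \<le> H (?\<tau> b) - H (?\<tau> a)"
      using Henstock_Kurzweil_Integration.integral_combine[OF ab(1) less_imp_le[OF ab(2)] f_int]
      by (simp add: algebra_simps)
  qed
  also have "\<dots> \<le> H x0"
    using H_mono[of "?\<tau> c" x0] H_mono[of 0 "?\<tau> \<epsilon>"] \<tau>[of c] \<tau>[of \<epsilon>] levels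
    by (auto simp: H_def)
  finally show ?thesis unfolding H_def by simp
qed

section \<open>The sign of \<open>u\<close>\<close>

lemma nonpos_if_integral_diverges_right:
  fixes u f \<rho> :: "real \<Rightarrow> real"
  assumes uc: "continuous_on {0..L} u" and u0: "u 0 = 0" and uL: "u L = 0"
    and var: "\<And>x y. 0 < x \<Longrightarrow> x < y \<Longrightarrow> y < L \<Longrightarrow> \<bar>u y - u x\<bar> \<le> integral {x..y} \<rho>"
    and \<rho>: "\<rho> integrable_on {0..L}" "\<And>s. 0 \<le> \<rho> s"
    and w: "(\<lambda>s. \<bar>f (u s)\<bar> * \<rho> s) integrable_on {0..L}"
    and fc: "continuous_on {0<..} f"
    and diverges: "\<forall>\<delta>\<in>{0<..<1}. filterlim (\<lambda>\<epsilon>. integral {\<epsilon>..\<delta>} f) at_top (at_right 0)"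
    and x: "x \<in> {0..L}"
  shows "u x \<le> 0"
proof (rule ccontr)
  assume "\<not> u x \<le> 0"
  then have ux: "0 < u x" by simp
  then have "x \<noteq> 0" "x \<noteq> L" using u0 uL by auto
  with x have x': "0 < x" "x < L" by auto
  let ?w = "\<lambda>s. \<bar>f (u s)\<bar> * \<rho> s"
  define c where "c = min (1/2) (u x / 2)"
  have c: "0 < c" "c < 1" "c < u x" using ux unfolding c_def by auto
  define B where "B = integral {0..x} ?w"
  have "eventually (\<lambda>\<epsilon>. B + 2 < integral {\<epsilon>..c} f) (at_right 0)"
    using diverges c by (auto simp: filterlim_at_top_dense)
  moreover have "eventually (\<lambda>\<epsilon>. 0 < \<epsilon> \<and> \<epsilon> < c) (at_right (0::real))"
    using c by (intro eventually_conj eventually_at_right_less) (simp add: eventually_at_right_field, blast)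
  ultimately have "eventually (\<lambda>\<epsilon>. B + 2 < integral {\<epsilon>..c} f \<and> 0 < \<epsilon> \<and> \<epsilon> < c) (at_right 0)"
    by (rule eventually_conj)
  from eventually_happens'[OF trivial_limit_at_right_real this]
  obtain \<epsilon> where \<epsilon>: "B + 2 < integral {\<epsilon>..c} f" "0 < \<epsilon>" "\<epsilon> < c" by blast
  have sub: "{0..x} \<subseteq> {0..L}" using x' by auto
  have "integral {\<epsilon>..c} f - 2 * (c - \<epsilon>) \<le> B"
    unfolding B_def
  proof (rule integral_le_crossing_energy[where \<rho> = \<rho>])
    show "continuous_on {0..x} u" using continuous_on_subset[OF uc sub] .
    show "u y - u x' \<le> integral {x'..y} \<rho>" if "0 < x'" "x' < y" "y \<le> x" for x' y
      using var[of x' y] that x' by auto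
    show "\<rho> integrable_on {0..x}" using integrable_on_subinterval[OF \<rho>(1) sub] .
    show "?w integrable_on {0..x}" using integrable_on_subinterval[OF w sub] .
  qed (use x' u0 \<rho>(2) fc \<epsilon> c in auto)
  then have "integral {\<epsilon>..c} f \<le> B + 2 * (c - \<epsilon>)" by simp
  also have "\<dots> < B + 2" using \<epsilon> c by simp
  finally show False using \<epsilon>(1) by simp
qed

lemma nonneg_if_integral_diverges_left:
  fixes u f \<rho> :: "real \<Rightarrow> real"
  assumes uc: "continuous_on {0..L} u" and u0: "u 0 = 0" and uL: "u L = 0"
    and var: "\<And>x y. 0 < x \<Longrightarrow> x < y \<Longrightarrow> y < L \<Longrightarrow> \<bar>u y - u x\<bar> \<le> integral {x..y} \<rho>"
    and \<rho>: "\<rho> integrable_on {0..L}" "\<And>s. 0 \<le> \<rho> s"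
    and w: "(\<lambda>s. \<bar>f (u s)\<bar> * \<rho> s) integrable_on {0..L}"
    and fc: "continuous_on {..<0} f"
    and diverges: "\<forall>\<delta>\<in>{0<..<1}. filterlim (\<lambda>\<epsilon>. integral {-\<delta>..-\<epsilon>} f) at_top (at_right 0)"
    and x: "x \<in> {0..L}"
  shows "0 \<le> u x"
proof -
  have "- u x \<le> 0"
  proof (rule nonpos_if_integral_diverges_right[where f = "\<lambda>t. f (- t)" and \<rho> = \<rho>, OF _ _ _ _ \<rho> _ _ _ x])
    show "continuous_on {0..L} (\<lambda>s. - u s)" by (intro continuous_intros uc)
    show "\<bar>- u y - - u x\<bar> \<le> integral {x..y} \<rho>" if "0 < x" "x < y" "y < L" for x y
      using var[OF that] by (simp add: abs_minus_commute)
    show "continuous_on {0<..} (\<lambda>t. f (- t))"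
      by (rule continuous_on_compose2[OF fc]) (auto intro: continuous_intros)
    have "integral {\<epsilon>..\<delta>} (\<lambda>t. f (- t)) = integral {-\<delta>..-\<epsilon>} f" for \<epsilon> \<delta> :: real
      using Henstock_Kurzweil_Integration.integral_reflect_real[of "-\<epsilon>" "-\<delta>" f] by simp
    then show "\<forall>\<delta>\<in>{0<..<1}. filterlim (\<lambda>\<epsilon>. integral {\<epsilon>..\<delta>} (\<lambda>t. f (- t))) at_top (at_right 0)"
      using diverges by simp
  qed (use u0 uL w in auto)
  then show ?thesis by simp
qed

lemma H_phi_continuous_on_real:
  assumes "H_phi \<phi>"
  shows "continuous_on (- {0}) (\<lambda>t. real_of_ereal (\<phi> t))"
proof (rule continuous_at_imp_continuous_on, rule ballI)
  fix t :: real assume "t \<in> - {0}"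
  then have "\<bar>\<phi> t\<bar> \<noteq> \<infinity>" using assms unfolding H_phi_def by auto
  moreover have "isCont \<phi> t"
    using assms unfolding H_phi_def by (simp add: continuous_on_eq_continuous_at)
  ultimately show "isCont (\<lambda>t. real_of_ereal (\<phi> t)) t"
    by (intro isCont_o2[OF _ continuous_at_of_ereal])
qed

theorem mainTheorem7:
  fixes L :: real and \<phi> :: "real \<Rightarrow> ereal" and u :: "real \<Rightarrow> real"
  assumes "L > 0" and "H_phi \<phi>" and "\<phi> 0 = \<infinity>"
    and "H1_0 L u" and "comp_L2 L \<phi> u"
  shows "((\<forall>\<delta>\<in>{0<..<1}. filterlim (\<lambda>\<epsilon>. integral {\<epsilon>..\<delta>} (\<lambda>t. real_of_ereal (\<phi> t))) at_top (at_right 0))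
           \<longrightarrow> (\<forall>x\<in>{0..L}. u x \<le> 0))
       \<and> ((\<forall>\<delta>\<in>{0<..<1}. filterlim (\<lambda>\<epsilon>. integral {-\<delta>..-\<epsilon>} (\<lambda>t. real_of_ereal (\<phi> t))) at_top (at_right 0))
           \<longrightarrow> (\<forall>x\<in>{0..L}. u x \<ge> 0))"
proof -
  let ?f = "\<lambda>t. real_of_ereal (\<phi> t)"
  have uc: "continuous_on {0..L} u" and u0: "u 0 = 0" and uL: "u L = 0"
    using assms(4) unfolding H1_0_def by auto
  obtain g where g: "L2_on L g" and weak: "\<And>\<psi> \<psi>'. C1c_test L \<psi> \<psi>' \<Longrightarrow>
      (LINT s:{0<..<L}|lborel. u s * \<psi>' s) = - (LINT s:{0<..<L}|lborel. g s * \<psi> s)"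
    using assms(4) unfolding H1_0_def H1_on_def by blast
  have var: "\<bar>u y - u x\<bar> \<le> integral {x..y} (\<lambda>s. \<bar>g s\<bar>)" if "0 < x" "x < y" "y < L" for x y
    using weak_derivative_variation_bound[OF uc g weak that] .
  have \<rho>: "(\<lambda>s. \<bar>g s\<bar>) integrable_on {0..L}"
    by (rule set_integrable_imp_integrable_on_Icc[OF set_integrable_abs[OF L2_on_set_integrable[OF g]]])
  have "L2_on L (\<lambda>s. ?f (u s))" using assms(5) unfolding comp_L2_def by simp
  from set_integrable_imp_integrable_on_Icc[OF set_integrable_abs[OF L2_on_set_integrable_mult[OF this g]]]
  have w: "(\<lambda>s. \<bar>?f (u s)\<bar> * \<bar>g s\<bar>) integrable_on {0..L}" by (simp add: abs_mult)
  have fc: "continuous_on {0<..} ?f" "continuous_on {..<0} ?f"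
    by (auto intro: continuous_on_subset[OF H_phi_continuous_on_real[OF assms(2)]])
  show ?thesis
    using nonpos_if_integral_diverges_right[OF uc u0 uL var \<rho> abs_ge_zero w fc(1)]
      nonneg_if_integral_diverges_left[OF uc u0 uL var \<rho> abs_ge_zero w fc(2)]
    by blast
qed

end
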